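(* Let $C\ge 0$ and let $(D^n,f)$ be an Ameso($C$) pair with $D^n\subseteq\mathbb{Z}^n$. Then for all $\vec x,\vec a\in\mathbb{Z}^n$ with $\vec x,\vec x+\vec a,\vec x-\vec a\in D^n$, $f(\vec x+\vec a)+f(\vec x-\vec a)+C\ge 2f(\vec x)$.
   Context: Floors and ceilings of vectors are taken componentwise. A set $D^n\subseteq\mathbb{Z}^n$ is an Ameso set if $\lceil(\vec x+\vec y)/2\rceil,\lfloor(\vec x+\vec y)/2\rfloor\in D^n$ for all $\vec x,\vec y\in D^n$. For $C\ge 0$, $(D^n,f)$ is an Ameso($C$) pair if $D^n$ is an Ameso set, $f:D^n\to\mathbb{R}$ is bounded below, and $f(\vec x)+f(\vec y)+C\ge f(\lceil(\vec x+\vec y)/2\rceil)+f(\lfloor(\vec x+\vec y)/2\rfloor)$ for all $\vec x,\vec y\in D^n$. *)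

theory Defs
  imports "HOL-Analysis.Analysis"
begin

definition mid_ceil :: "int ^ 'n \<Rightarrow> int ^ 'n \<Rightarrow> int ^ 'n" where
  "mid_ceil x y = (\<chi> i. \<lceil>(real_of_int (x $ i) + real_of_int (y $ i)) / 2\<rceil>)"

definition mid_floor :: "int ^ 'n \<Rightarrow> int ^ 'n \<Rightarrow> int ^ 'n" where
  "mid_floor x y = (\<chi> i. \<lfloor>(real_of_int (x $ i) + real_of_int (y $ i)) / 2\<rfloor>)"

definition ameso_set :: "(int ^ 'n) set \<Rightarrow> bool" where
  "ameso_set D \<longleftrightarrow> (\<forall>x\<in>D. \<forall>y\<in>D. mid_ceil x y \<in> D \<and> mid_floor x y \<in> D)"

definition ameso_pair :: "real \<Rightarrow> (int ^ 'n) set \<Rightarrow> (int ^ 'n \<Rightarrow> real) \<Rightarrow> bool" where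
  "ameso_pair C D f \<longleftrightarrow> ameso_set D \<and> bdd_below (f ` D) \<and>
     (\<forall>x\<in>D. \<forall>y\<in>D. f x + f y + C \<ge> f (mid_ceil x y) + f (mid_floor x y))"

end

theory Submission
  imports Defs
begin

lemma mid_ceil_add_diff: "mid_ceil (x + a) (x - a) = (x :: int ^ 'n)"
  unfolding mid_ceil_def by (simp add: vec_eq_iff)

lemma mid_floor_add_diff: "mid_floor (x + a) (x - a) = (x :: int ^ 'n)"
  unfolding mid_floor_def by (simp add: vec_eq_iff)

theorem mainTheorem5:
  fixes C :: real and D :: "(int ^ 'n) set" and f :: "int ^ 'n \<Rightarrow> real"
  assumes "C \<ge> 0"
    and "ameso_pair C D f"
    and "x \<in> D" and "x + a \<in> D" and "x - a \<in> D"
  shows "f (x + a) + f (x - a) + C \<ge> 2 * f x"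
proof -
  have "f (x + a) + f (x - a) + C \<ge> f (mid_ceil (x + a) (x - a)) + f (mid_floor (x + a) (x - a))"
    using assms(2,4,5) unfolding ameso_pair_def by blast
  then show ?thesis
    by (simp add: mid_ceil_add_diff mid_floor_add_diff)
qed

end
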